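(* Let $f:\mathbb{R}^d\to\mathbb{R}$ be bounded below by $f^*$ and smooth with non-negative constants $L_1,\dots,L_d$, i.e. $f(y)\le f(x)+\langle\nabla f(x),y-x\rangle+\sum_{i=1}^d\frac{L_i}{2}(y_i-x_i)^2$ for all $x,y$, and let $\bar L:=\frac1d\sum_i L_i$. Suppose the SPB assumption holds. Consider signSGD with Option 2: starting from $x_0$, $x_{k+1}=\arg\min\{f(x_k),\,f(x_k-\gamma_k\,\mathrm{sign}\,\hat g(x_k))\}$ (i.e. $x_{k+1}$ is whichever of the two points $x_k$ and $x_k-\gamma_k\mathrm{sign}\,\hat g(x_k)$ has smaller $f$-value), with $\hat g(x_k)$ a fresh draw of the estimator at $x_k$. (a) If $\gamma_k=\gamma_0/\sqrt{k+1}$ with $\gamma_0>0$, then for every $K\ge1$, $$\frac1K\sum_{k=0}^{K-1}\mathbb{E}\|\nabla f(x_k)\|_\rho\le\frac1{\sqrt K}\left[\frac{f(x_0)-f^*}{\gamma_0}+\gamma_0 d\bar L\right].$$ (b) If $\gamma_k\equiv\gamma>0$, then $\frac1K\sum_{k=0}^{K-1}\mathbb{E}\|\nabla f(x_k)\|_\rho\le\frac{f(x_0)-f^*}{\gamma K}+\frac{\gamma d\bar L}{2}$.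
   Context: Notation: $g(x):=\nabla f(x)$; $\mathrm{sign}\,t=1,0,-1$ for $t>0,t=0,t<0$, applied entrywise to vectors. SPB assumption: for every $x$ one has access to an independent (not necessarily unbiased) random estimator $\hat g(x)$ of $g(x)$ such that for every $i$ with $g_i(x)\ne0$, $\rho_i(x):=\mathrm{Prob}(\mathrm{sign}\,\hat g_i(x)=\mathrm{sign}\,g_i(x))>\tfrac12$. The $\rho$-norm is $\|g(x)\|_\rho:=\sum_{i=1}^d(2\rho_i(x)-1)|g_i(x)|$ (terms with $g_i(x)=0$ vanish). *)

theory Defs
  imports "HOL-Probability.Probability"
begin

definition sgnvec :: "real ^ 'd \<Rightarrow> real ^ 'd" where
  "sgnvec v = (\<chi> i. sgn (v $ i))"

definition signsgd_step ::
  "(real ^ 'd \<Rightarrow> real) \<Rightarrow> real \<Rightarrow> real ^ 'd \<Rightarrow> real ^ 'd \<Rightarrow> real ^ 'd" where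
  "signsgd_step f gam x gh =
     (let y = x - gam *\<^sub>R sgnvec gh in if f y < f x then y else x)"

text \<open>Distribution of the iterate x_k; G x is the distribution of the estimator
  ghat(x); each step uses a fresh independent draw.\<close>
fun signsgd_dist ::
  "(real ^ 'd \<Rightarrow> real) \<Rightarrow> (real ^ 'd \<Rightarrow> (real ^ 'd) measure) \<Rightarrow> (nat \<Rightarrow> real)
    \<Rightarrow> real ^ 'd \<Rightarrow> nat \<Rightarrow> (real ^ 'd) measure" where
  "signsgd_dist f G gam x0 0 = return borel x0"
| "signsgd_dist f G gam x0 (Suc k) =
     signsgd_dist f G gam x0 k \<bind>
       (\<lambda>x. G x \<bind> (\<lambda>v. return borel (signsgd_step f (gam k) x v)))"

definition rho ::
  "(real ^ 'd \<Rightarrow> (real ^ 'd) measure) \<Rightarrow> (real ^ 'd \<Rightarrow> real ^ 'd) \<Rightarrow> real ^ 'd \<Rightarrow> 'd \<Rightarrow> real" where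
  "rho G g x i = measure (G x) {v \<in> space (G x). sgn (v $ i) = sgn (g x $ i)}"

definition rho_norm ::
  "(real ^ 'd \<Rightarrow> (real ^ 'd) measure) \<Rightarrow> (real ^ 'd \<Rightarrow> real ^ 'd) \<Rightarrow> real ^ 'd \<Rightarrow> real" where
  "rho_norm G g x = (\<Sum>i\<in>UNIV. (2 * rho G g x i - 1) * \<bar>g x $ i\<bar>)"

end

theory Submission
  imports Defs
begin

text \<open>
  By smoothness, f at the sign step x - gamma sign(ghat) is at most
  f x - gamma <g x, sign ghat> + gamma^2 (sum L) / 2, and in expectation over ghat each
  coordinate of <g x, sign ghat> is at least (2 rho_i - 1) |g_i x|.  Since Option 2 never
  increases f, the gaps E f(x_k) - f* are non-increasing, so dividing the k-th descent
  inequality by gamma_k and summing telescopes, for non-increasing step sizes, to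
  sum_k E ||g(x_k)||_rho <= (f x_0 - f*) / gamma_(K-1) + (sum L) / 2 * sum_k gamma_k.
\<close>

lemma sgnvec_eq_sum_axis: "sgnvec v = (\<Sum>i\<in>UNIV. sgn (v $ i) *\<^sub>R axis i 1)"
  by (simp add: sgnvec_def vec_eq_iff sum_component axis_def mult_ac
      if_distrib[of "\<lambda>t. _ * t"] cong: if_cong)

lemma measurable_sgnvec [measurable]: "sgnvec \<in> borel_measurable (borel :: (real ^ 'd) measure)"
  unfolding sgnvec_eq_sum_axis[abs_def] by measurable

lemma abs_mult_sign_agreement_le:
  fixes c t :: real
  assumes "v \<in> A \<longleftrightarrow> sgn t = sgn c"
  shows "\<bar>c\<bar> * (2 * indicator A v - 1) \<le> c * sgn t"
  using assms by (cases "c > 0"; cases "c < 0"; cases "t > 0"; cases "t < 0")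
    (auto simp: sgn_if indicator_def)

lemma sign_agreement_le_integral:
  fixes M :: "(real ^ 'd) measure"
  assumes "prob_space M" and sets_M [measurable_cong]: "sets M = sets borel"
  shows "(2 * measure M {v \<in> space M. sgn (v $ i) = sgn c} - 1) * \<bar>c\<bar>
    \<le> (\<integral>v. c * sgn (v $ i) \<partial>M)"
proof -
  interpret prob_space M by fact
  define A where "A = {v \<in> space M. sgn (v $ i) = sgn c}"
  have A [measurable]: "A \<in> sets M" unfolding A_def by measurable
  have integrable_indicator: "integrable M (\<lambda>v. indicator A v :: real)"
    using A by (intro integrable_real_indicator) (auto simp: emeasure_eq_measure)
  have "(2 * measure M A - 1) * \<bar>c\<bar> = (\<integral>v. \<bar>c\<bar> * (2 * indicator A v - 1) \<partial>M)"
    using integrable_indicator by (simp add: prob_space algebra_simps)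
  also have "\<dots> \<le> (\<integral>v. c * sgn (v $ i) \<partial>M)"
  proof (rule integral_mono)
    show "integrable M (\<lambda>v. \<bar>c\<bar> * (2 * indicator A v - 1))"
      using integrable_indicator by simp
    show "integrable M (\<lambda>v. c * sgn (v $ i))"
      by (rule integrable_const_bound[where B = "\<bar>c\<bar>"]) (auto simp: abs_mult abs_sgn_eq)
    show "\<bar>c\<bar> * (2 * indicator A v - 1) \<le> c * sgn (v $ i)" if "v \<in> space M" for v
      using that by (intro abs_mult_sign_agreement_le) (simp add: A_def)
  qed
  finally show ?thesis unfolding A_def .
qed

lemma sum_inverse_sqrt_le: "(\<Sum>k<K. 1 / sqrt (real k + 1)) \<le> 2 * sqrt (real K)"
proof (induction K)
  case 0
  then show ?case by simp
next
  case (Suc K)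
  define s t where "s = sqrt (real K)" and "t = sqrt (real K + 1)"
  have "t > 0" and "s\<^sup>2 = real K" and "t\<^sup>2 = real K + 1"
    unfolding s_def t_def by simp_all
  moreover have "0 \<le> (s - t)\<^sup>2" by simp
  ultimately have "2 * s + 1 / t \<le> 2 * t"
    by (simp add: field_simps power2_eq_square algebra_simps)
  then show ?case using Suc.IH unfolding s_def t_def by (simp add: add.commute)
qed

lemma descent_sum_le:
  fixes a p gam :: "nat \<Rightarrow> real"
  assumes gam_pos: "\<And>k. 0 < gam k" and gam_mono: "\<And>k. gam (Suc k) \<le> gam k"
    and p_nonneg: "\<And>k. 0 \<le> p k" and p_mono: "\<And>k. p (Suc k) \<le> p k"
    and descent: "\<And>k. gam k * a k + p (Suc k) \<le> p k + gam k ^ 2 * c"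
  shows "(\<Sum>k<Suc n. a k) \<le> p 0 / gam n + c * (\<Sum>k<Suc n. gam k)"
proof -
  have a_le: "a k \<le> (p k - p (Suc k)) / gam k + c * gam k" for k
    using descent[of k] gam_pos[of k] by (simp add: field_simps power2_eq_square)
  have p_le: "p k \<le> p 0" for k
    by (induction k) (use p_mono order_trans in auto)
  have "(\<Sum>k<Suc n. a k) \<le> (p 0 - p (Suc n)) / gam n + c * (\<Sum>k<Suc n. gam k)"
  proof (induction n)
    case 0
    then show ?case using a_le[of 0] by simp
  next
    case (Suc n)
    have "(p 0 - p (Suc n)) / gam n \<le> (p 0 - p (Suc n)) / gam (Suc n)"
      using p_le[of "Suc n"] gam_pos gam_mono[of n] by (intro divide_left_mono) auto
    then show ?case
      using Suc.IH a_le[of "Suc n"] by (simp add: diff_divide_distrib algebra_simps)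
  qed
  also have "(p 0 - p (Suc n)) / gam n \<le> p 0 / gam n"
    using p_nonneg[of "Suc n"] gam_pos[of n] by (intro divide_right_mono) auto
  finally show ?thesis by simp
qed

lemma ennreal_descent_sum_le:
  fixes A phi :: "nat \<Rightarrow> ennreal" and gam :: "nat \<Rightarrow> real"
  assumes gam_pos: "\<And>k. 0 < gam k" and gam_mono: "\<And>k. gam (Suc k) \<le> gam k"
    and c_nonneg: "0 \<le> c" and p0_nonneg: "0 \<le> p0" and phi_0: "phi 0 = ennreal p0"
    and phi_mono: "\<And>k. phi (Suc k) \<le> phi k"
    and descent: "\<And>k. ennreal (gam k) * A k + phi (Suc k) \<le> phi k + ennreal (gam k ^ 2 * c)"
  shows "(\<Sum>k<Suc n. A k) \<le> ennreal (p0 / gam n + c * (\<Sum>k<Suc n. gam k))"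
proof -
  have phi_finite: "phi k < \<top>" for k
  proof -
    have "phi k \<le> phi 0" by (induction k) (use phi_mono order_trans in auto)
    then show ?thesis unfolding phi_0 by (simp add: order_le_less_trans)
  qed
  have A_finite: "A k < \<top>" for k
  proof -
    have "ennreal (gam k) * A k < \<top>"
      using descent[of k] phi_finite[of k]
      by (metis add_increasing2 ennreal_add_less_top ennreal_less_top le_less_trans zero_le)
    then show ?thesis using gam_pos[of k] by (auto simp: ennreal_mult_less_top)
  qed
  define p a where "p k = enn2real (phi k)" and "a k = enn2real (A k)" for k
  have phi_eq: "phi k = ennreal (p k)" and p_nonneg: "0 \<le> p k"
    and A_eq: "A k = ennreal (a k)" and a_nonneg: "0 \<le> a k" for k
    unfolding p_def a_def using phi_finite[of k] A_finite[of k] by (auto simp: ennreal_enn2real_if)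
  have "(\<Sum>k<Suc n. a k) \<le> p 0 / gam n + c * (\<Sum>k<Suc n. gam k)"
  proof (rule descent_sum_le[where gam = gam and p = p, OF gam_pos gam_mono p_nonneg])
    show "p (Suc k) \<le> p k" for k
      using phi_mono[of k] p_nonneg by (simp add: phi_eq)
    show "gam k * a k + p (Suc k) \<le> p k + (gam k)\<^sup>2 * c" for k
    proof -
      have "ennreal (gam k * a k + p (Suc k)) \<le> ennreal (p k + (gam k)\<^sup>2 * c)"
        using descent[of k] gam_pos[of k] a_nonneg[of k] p_nonneg c_nonneg
        by (simp add: A_eq phi_eq flip: ennreal_plus ennreal_mult)
      then show ?thesis
        using p_nonneg[of k] c_nonneg by (subst (asm) ennreal_le_iff) auto
    qed
  qed
  moreover have "p 0 = p0"
    using phi_0 p0_nonneg by (simp add: p_def)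
  moreover have "(\<Sum>k<Suc n. A k) = ennreal (\<Sum>k<Suc n. a k)"
    by (simp add: A_eq a_nonneg del: sum.lessThan_Suc)
  ultimately show ?thesis
    by (metis ennreal_leI)
qed

lemma ennreal_inverse_mult_le:
  assumes "X \<le> ennreal (real K * B)" and "1 \<le> K"
  shows "ennreal (1 / real K) * X \<le> ennreal B"
proof -
  have "ennreal (1 / real K) * X \<le> ennreal (1 / real K) * ennreal (real K * B)"
    using assms(1) by (rule mult_left_mono) simp
  also have "\<dots> = ennreal B"
    using assms(2) by (simp add: ennreal_mult'[symmetric])
  finally show ?thesis .
qed

locale signsgd_problem =
  fixes f :: "real ^ 'd \<Rightarrow> real"
    and g :: "real ^ 'd \<Rightarrow> real ^ 'd"
    and G :: "real ^ 'd \<Rightarrow> (real ^ 'd) measure"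
    and L :: "'d \<Rightarrow> real"
    and fstar :: real
  assumes grad: "\<And>x. (f has_derivative (\<lambda>h. g x \<bullet> h)) (at x)"
    and lower: "\<And>x. fstar \<le> f x"
    and L_nonneg: "\<And>i. 0 \<le> L i"
    and smooth: "\<And>x y. f y \<le> f x + g x \<bullet> (y - x) + (\<Sum>i\<in>UNIV. L i / 2 * (y $ i - x $ i)\<^sup>2)"
    and kernel: "G \<in> borel \<rightarrow>\<^sub>M prob_algebra borel"
begin

lemma measurable_f [measurable]: "f \<in> borel_measurable borel"
  using grad by (intro borel_measurable_continuous_onI continuous_at_imp_continuous_on
      ballI has_derivative_continuous)

lemma prob_space_G: "prob_space (G x)" and sets_G: "sets (G x) = sets borel"
  using measurable_space[OF kernel, of x] by (auto simp: space_prob_algebra)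

lemma sum_L_nonneg: "0 \<le> (\<Sum>i\<in>UNIV. L i)"
  using L_nonneg by (simp add: sum_nonneg)

lemma f_signsgd_step_le: "f (signsgd_step f gam x v) \<le> f x"
  by (simp add: signsgd_step_def Let_def)

lemma f_signsgd_step_le_smooth:
  "f (signsgd_step f gam x v) \<le>
     f x - gam * (\<Sum>i\<in>UNIV. g x $ i * sgn (v $ i)) + gam\<^sup>2 / 2 * (\<Sum>i\<in>UNIV. L i)"
proof -
  define y where "y = x - gam *\<^sub>R sgnvec v"
  have "f (signsgd_step f gam x v) \<le> f y"
    by (simp add: signsgd_step_def Let_def y_def)
  also have "\<dots> \<le> f x + g x \<bullet> (y - x) + (\<Sum>i\<in>UNIV. L i / 2 * (y $ i - x $ i)\<^sup>2)"
    by (rule smooth)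
  also have "g x \<bullet> (y - x) = - gam * (\<Sum>i\<in>UNIV. g x $ i * sgn (v $ i))"
    by (simp add: y_def inner_vec_def sgnvec_def sum_distrib_left mult_ac sum_negf)
  also have "(\<Sum>i\<in>UNIV. L i / 2 * (y $ i - x $ i)\<^sup>2) \<le> (\<Sum>i\<in>UNIV. L i / 2 * gam\<^sup>2)"
  proof (rule sum_mono)
    fix i
    have "(y $ i - x $ i)\<^sup>2 \<le> gam\<^sup>2"
      by (simp add: y_def sgnvec_def power_mult_distrib sgn_if)
    then show "L i / 2 * (y $ i - x $ i)\<^sup>2 \<le> L i / 2 * gam\<^sup>2"
      using L_nonneg[of i] by (intro mult_left_mono) auto
  qed
  also have "(\<Sum>i\<in>UNIV. L i / 2 * gam\<^sup>2) = gam\<^sup>2 / 2 * (\<Sum>i\<in>UNIV. L i)"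
    by (simp add: sum_distrib_left sum_distrib_right sum_divide_distrib mult_ac)
  finally show ?thesis by simp
qed

definition expected_gap :: "real \<Rightarrow> real ^ 'd \<Rightarrow> real" where
  "expected_gap gam x = (\<integral>v. f (signsgd_step f gam x v) - fstar \<partial>G x)"

lemma measurable_signsgd_step [measurable]:
  "(\<lambda>(x, v). signsgd_step f gam x v) \<in> borel \<Otimes>\<^sub>M borel \<rightarrow>\<^sub>M borel"
  unfolding signsgd_step_def Let_def by measurable

lemma measurable_signsgd_step_right [measurable]:
  "(\<lambda>v. signsgd_step f gam x v) \<in> borel \<rightarrow>\<^sub>M borel"
  unfolding signsgd_step_def Let_def by measurable

lemma integrable_gap: "integrable (G x) (\<lambda>v. f (signsgd_step f gam x v) - fstar)"
proof -
  interpret prob_space "G x" by (rule prob_space_G)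
  have [measurable_cong]: "sets (G x) = sets borel" by (rule sets_G)
  show ?thesis
    by (rule integrable_const_bound[where B = "f x - fstar"])
      (use lower f_signsgd_step_le in \<open>auto simp: sets_G abs_le_iff\<close>)
qed

lemma expected_gap_nonneg: "0 \<le> expected_gap gam x"
  unfolding expected_gap_def using lower by (intro Bochner_Integration.integral_nonneg) (simp add: algebra_simps)

lemma expected_gap_le: "expected_gap gam x \<le> f x - fstar"
proof -
  interpret prob_space "G x" by (rule prob_space_G)
  have "expected_gap gam x \<le> (\<integral>v. f x - fstar \<partial>G x)"
    unfolding expected_gap_def using integrable_gap f_signsgd_step_le by (intro integral_mono) auto
  then show ?thesis by (simp add: prob_space)
qed

lemma nn_integral_gap_eq_expected_gap:
  "(\<integral>\<^sup>+v. ennreal (f (signsgd_step f gam x v) - fstar) \<partial>G x) = ennreal (expected_gap gam x)"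
  unfolding expected_gap_def using integrable_gap lower
  by (intro nn_integral_eq_integral) (auto intro!: AE_I2)

lemma measurable_expected_gap [measurable]: "expected_gap gam \<in> borel_measurable borel"
proof -
  have "(\<lambda>x. \<integral>\<^sup>+v. ennreal (f (signsgd_step f gam x v) - fstar) \<partial>G x) \<in> borel_measurable borel"
    using measurable_signsgd_step[of gam] measurable_prob_algebraD[OF kernel]
    by (intro nn_integral_measurable_subprob_algebra2[where N = borel]) (auto simp: split_beta')
  then show ?thesis
    by (simp add: nn_integral_gap_eq_expected_gap expected_gap_nonneg)
qed

lemma expected_descent:
  assumes "0 < gam"
  shows "gam * rho_norm G g x + expected_gap gam x \<le> f x - fstar + gam\<^sup>2 / 2 * (\<Sum>i\<in>UNIV. L i)"
proof -
  interpret prob_space "G x" by (rule prob_space_G)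
  have [measurable_cong]: "sets (G x) = sets borel" by (rule sets_G)
  define c where "c = f x - fstar + gam\<^sup>2 / 2 * (\<Sum>i\<in>UNIV. L i)"
  have integrable_coord: "integrable (G x) (\<lambda>v. g x $ i * sgn (v $ i))" for i
    by (rule integrable_const_bound[where B = "\<bar>g x $ i\<bar>"]) (auto simp: abs_mult abs_sgn_eq)
  have "expected_gap gam x \<le> (\<integral>v. c - gam * (\<Sum>i\<in>UNIV. g x $ i * sgn (v $ i)) \<partial>G x)"
    unfolding expected_gap_def c_def using integrable_gap integrable_coord f_signsgd_step_le_smooth
    by (intro integral_mono) (auto simp: algebra_simps)
  also have "\<dots> = c - gam * (\<Sum>i\<in>UNIV. \<integral>v. g x $ i * sgn (v $ i) \<partial>G x)"
    using integrable_coord by (simp add: prob_space)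
  also have "\<dots> \<le> c - gam * rho_norm G g x"
  proof -
    have "rho_norm G g x \<le> (\<Sum>i\<in>UNIV. \<integral>v. g x $ i * sgn (v $ i) \<partial>G x)"
      unfolding rho_norm_def rho_def
      by (intro sum_mono sign_agreement_le_integral prob_space_G sets_G)
    then show ?thesis using assms by (simp add: mult_left_mono)
  qed
  finally show ?thesis unfolding c_def by simp
qed

lemma measurable_signsgd_transition:
  "(\<lambda>x. G x \<bind> (\<lambda>v. return borel (signsgd_step f gam x v))) \<in> borel \<rightarrow>\<^sub>M prob_algebra borel"
  using measurable_compose[OF measurable_signsgd_step[of gam] measurable_return_prob_space]
  by (intro measurable_bind_prob_space2[OF kernel]) (simp add: split_beta')

lemma signsgd_dist_in_prob_algebra: "signsgd_dist f G gam x0 k \<in> space (prob_algebra borel)"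
proof (induction k)
  case 0
  show ?case using measurable_space[OF measurable_return_prob_space, of x0 borel] by simp
next
  case (Suc k)
  show ?case
    using measurable_space[OF measurable_bind_prob_space[OF measurable_ident_sets[OF refl]
          measurable_signsgd_transition] Suc.IH]
    by simp
qed

lemma sets_signsgd_dist: "sets (signsgd_dist f G gam x0 k) = sets borel"
  and prob_space_signsgd_dist: "prob_space (signsgd_dist f G gam x0 k)"
  using signsgd_dist_in_prob_algebra[of gam x0 k] by (auto simp: space_prob_algebra)

lemma nn_integral_signsgd_dist_Suc:
  assumes [measurable]: "F \<in> borel_measurable borel"
  shows "(\<integral>\<^sup>+y. F y \<partial>signsgd_dist f G gam x0 (Suc k)) =
     (\<integral>\<^sup>+x. (\<integral>\<^sup>+v. F (signsgd_step f (gam k) x v) \<partial>G x) \<partial>signsgd_dist f G gam x0 k)"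
proof -
  have transition: "(\<lambda>x. G x \<bind> (\<lambda>v. return borel (signsgd_step f (gam k) x v)))
      \<in> signsgd_dist f G gam x0 k \<rightarrow>\<^sub>M subprob_algebra borel"
    using measurable_prob_algebraD[OF measurable_signsgd_transition]
    by (subst measurable_cong_sets[OF sets_signsgd_dist refl])
  have return_step:
    "(\<lambda>v. return borel (signsgd_step f (gam k) x v)) \<in> G x \<rightarrow>\<^sub>M subprob_algebra borel" for x
    by (subst measurable_cong_sets[OF sets_G refl]) measurable
  show ?thesis
    by (simp add: nn_integral_bind[OF assms transition] nn_integral_bind[OF assms return_step]
        nn_integral_return)
qed

lemma nn_integral_gap_signsgd_dist_Suc:
  "(\<integral>\<^sup>+x. ennreal (f x - fstar) \<partial>signsgd_dist f G gam x0 (Suc k)) =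
     (\<integral>\<^sup>+x. ennreal (expected_gap (gam k) x) \<partial>signsgd_dist f G gam x0 k)"
  by (subst nn_integral_signsgd_dist_Suc) (auto simp: nn_integral_gap_eq_expected_gap)

lemma nn_integral_gap_signsgd_dist_Suc_le:
  "(\<integral>\<^sup>+x. ennreal (f x - fstar) \<partial>signsgd_dist f G gam x0 (Suc k))
    \<le> (\<integral>\<^sup>+x. ennreal (f x - fstar) \<partial>signsgd_dist f G gam x0 k)"
  unfolding nn_integral_gap_signsgd_dist_Suc by (intro nn_integral_mono ennreal_leI expected_gap_le)

lemma signsgd_dist_descent:
  fixes x0 :: "real ^ 'd"
  assumes gam: "0 < gam k"
  defines "D \<equiv> signsgd_dist f G gam x0"
  shows "ennreal (gam k) * (\<integral>\<^sup>+x. ennreal (rho_norm G g x) \<partial>D k)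
           + (\<integral>\<^sup>+x. ennreal (f x - fstar) \<partial>D (Suc k))
         \<le> (\<integral>\<^sup>+x. ennreal (f x - fstar) \<partial>D k) + ennreal ((gam k)\<^sup>2 / 2 * (\<Sum>i\<in>UNIV. L i))"
proof -
  interpret prob_space "D k" unfolding D_def by (rule prob_space_signsgd_dist)
  have [measurable_cong]: "sets (D k) = sets borel" unfolding D_def by (rule sets_signsgd_dist)
  define c where "c = (gam k)\<^sup>2 / 2 * (\<Sum>i\<in>UNIV. L i)"
  define h where "h = expected_gap (gam k)"
  \<comment> \<open>rho_norm need not be measurable; it is integrated only via the measurable bound u / gam k\<close>
  define u where "u x = f x - fstar + c - h x" for x
  have gap_Suc: "(\<integral>\<^sup>+x. ennreal (f x - fstar) \<partial>D (Suc k)) = (\<integral>\<^sup>+x. ennreal (h x) \<partial>D k)"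
    unfolding D_def h_def by (rule nn_integral_gap_signsgd_dist_Suc)
  have u_nonneg: "0 \<le> u x" for x
    using expected_gap_le[of "gam k" x] sum_L_nonneg unfolding u_def h_def c_def
    by (simp add: add_increasing2)
  have "ennreal (gam k) * (\<integral>\<^sup>+x. ennreal (rho_norm G g x) \<partial>D k)
      \<le> ennreal (gam k) * (\<integral>\<^sup>+x. ennreal (u x / gam k) \<partial>D k)"
    using expected_descent[OF gam] gam
    by (intro mult_left_mono nn_integral_mono ennreal_leI)
      (auto simp: u_def h_def c_def field_simps)
  also have "\<dots> = (\<integral>\<^sup>+x. ennreal (u x) \<partial>D k)"
    using gam u_nonneg
    by (subst nn_integral_cmult[symmetric])
      (auto intro!: nn_integral_cong simp: u_def h_def ennreal_mult[symmetric])
  finally have "ennreal (gam k) * (\<integral>\<^sup>+x. ennreal (rho_norm G g x) \<partial>D k)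
      + (\<integral>\<^sup>+x. ennreal (h x) \<partial>D k)
      \<le> (\<integral>\<^sup>+x. ennreal (u x) + ennreal (h x) \<partial>D k)"
    by (subst nn_integral_add) (auto simp: u_def h_def intro: add_right_mono)
  also have "\<dots> = (\<integral>\<^sup>+x. ennreal (f x - fstar) + ennreal c \<partial>D k)"
    using u_nonneg expected_gap_nonneg lower sum_L_nonneg
    by (intro nn_integral_cong) (simp add: u_def h_def c_def flip: ennreal_plus)
  also have "\<dots> = (\<integral>\<^sup>+x. ennreal (f x - fstar) \<partial>D k) + ennreal c"
    by (subst nn_integral_add) (auto simp: emeasure_space_1)
  finally show ?thesis
    unfolding gap_Suc c_def .
qed

lemma sum_rho_norm_signsgd_dist_le:
  fixes x0 :: "real ^ 'd" and gam :: "nat \<Rightarrow> real"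
  assumes gam_pos: "\<And>k. 0 < gam k" and gam_mono: "\<And>k. gam (Suc k) \<le> gam k"
  shows "(\<Sum>k<Suc n. \<integral>\<^sup>+x. ennreal (rho_norm G g x) \<partial>signsgd_dist f G gam x0 k)
    \<le> ennreal ((f x0 - fstar) / gam n + (\<Sum>i\<in>UNIV. L i) / 2 * (\<Sum>k<Suc n. gam k))"
proof (rule ennreal_descent_sum_le[where gam = gam, OF gam_pos gam_mono])
  show "0 \<le> (\<Sum>i\<in>UNIV. L i) / 2"
    using sum_L_nonneg by simp
  show "0 \<le> f x0 - fstar"
    using lower by simp
  show "(\<integral>\<^sup>+x. ennreal (f x - fstar) \<partial>signsgd_dist f G gam x0 0) = ennreal (f x0 - fstar)"
    by (simp add: nn_integral_return)
  show "(\<integral>\<^sup>+x. ennreal (f x - fstar) \<partial>signsgd_dist f G gam x0 (Suc k))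
      \<le> (\<integral>\<^sup>+x. ennreal (f x - fstar) \<partial>signsgd_dist f G gam x0 k)" for k
    by (rule nn_integral_gap_signsgd_dist_Suc_le)
  show "ennreal (gam k) * (\<integral>\<^sup>+x. ennreal (rho_norm G g x) \<partial>signsgd_dist f G gam x0 k)
      + (\<integral>\<^sup>+x. ennreal (f x - fstar) \<partial>signsgd_dist f G gam x0 (Suc k))
      \<le> (\<integral>\<^sup>+x. ennreal (f x - fstar) \<partial>signsgd_dist f G gam x0 k)
        + ennreal ((gam k)\<^sup>2 * ((\<Sum>i\<in>UNIV. L i) / 2))" for k
    using signsgd_dist_descent[OF gam_pos] by (simp add: mult_ac)
qed

lemma average_rho_norm_decaying_step:
  fixes x0 :: "real ^ 'd"
  assumes gam0: "0 < gam0" and K: "1 \<le> K"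
  shows "ennreal (1 / real K) *
      (\<Sum>k<K. \<integral>\<^sup>+x. ennreal (rho_norm G g x) \<partial>signsgd_dist f G (\<lambda>k. gam0 / sqrt (real k + 1)) x0 k)
    \<le> ennreal (1 / sqrt (real K) * ((f x0 - fstar) / gam0 + gam0 * (\<Sum>i\<in>UNIV. L i)))"
proof (rule ennreal_inverse_mult_le[OF _ K])
  define gam where "gam k = gam0 / sqrt (real k + 1)" for k
  define S where "S = (\<Sum>i\<in>UNIV. L i)"
  obtain n where n: "K = Suc n" using K by (cases K) auto
  have gam_pos: "0 < gam k" and gam_mono: "gam (Suc k) \<le> gam k" for k
    using gam0 by (auto simp: gam_def intro!: divide_left_mono)
  have "(\<Sum>k<K. gam k) = gam0 * (\<Sum>k<K. 1 / sqrt (real k + 1))"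
    by (simp add: gam_def sum_distrib_left)
  also have "\<dots> \<le> gam0 * (2 * sqrt (real K))"
    using gam0 sum_inverse_sqrt_le by (intro mult_left_mono) auto
  finally have "S / 2 * (\<Sum>k<K. gam k) \<le> S / 2 * (gam0 * (2 * sqrt (real K)))"
    using sum_L_nonneg unfolding S_def by (intro mult_left_mono) auto
  moreover have "gam n = gam0 / sqrt (real K)"
    by (simp add: gam_def n add.commute)
  ultimately have "(f x0 - fstar) / gam n + S / 2 * (\<Sum>k<K. gam k)
      \<le> (f x0 - fstar) * sqrt (real K) / gam0 + S / 2 * (gam0 * (2 * sqrt (real K)))"
    by simp
  also have "\<dots> = real K * (1 / sqrt (real K) * ((f x0 - fstar) / gam0 + gam0 * S))"
    using K by (simp add: field_simps real_sqrt_mult[symmetric])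
  finally show "(\<Sum>k<K. \<integral>\<^sup>+x. ennreal (rho_norm G g x) \<partial>signsgd_dist f G gam x0 k)
      \<le> ennreal (real K * (1 / sqrt (real K) * ((f x0 - fstar) / gam0 + gam0 * S)))"
    using sum_rho_norm_signsgd_dist_le[where gam = gam and n = n, OF gam_pos gam_mono] unfolding n S_def
    by (auto intro: order_trans ennreal_leI)
qed

lemma average_rho_norm_constant_step:
  fixes x0 :: "real ^ 'd"
  assumes gam: "0 < gam" and K: "1 \<le> K"
  shows "ennreal (1 / real K) *
      (\<Sum>k<K. \<integral>\<^sup>+x. ennreal (rho_norm G g x) \<partial>signsgd_dist f G (\<lambda>k. gam) x0 k)
    \<le> ennreal ((f x0 - fstar) / (gam * real K) + gam * (\<Sum>i\<in>UNIV. L i) / 2)"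
proof (rule ennreal_inverse_mult_le[OF _ K])
  obtain n where n: "K = Suc n" using K by (cases K) auto
  have "(\<Sum>k<K. \<integral>\<^sup>+x. ennreal (rho_norm G g x) \<partial>signsgd_dist f G (\<lambda>k. gam) x0 k)
      \<le> ennreal ((f x0 - fstar) / gam + (\<Sum>i\<in>UNIV. L i) / 2 * (\<Sum>k<K. gam))"
    unfolding n by (rule sum_rho_norm_signsgd_dist_le) (use gam in auto)
  also have "(f x0 - fstar) / gam + (\<Sum>i\<in>UNIV. L i) / 2 * (\<Sum>k<K. gam)
      = real K * ((f x0 - fstar) / (gam * real K) + gam * (\<Sum>i\<in>UNIV. L i) / 2)"
    using K gam by (simp add: field_simps)
  finally show "(\<Sum>k<K. \<integral>\<^sup>+x. ennreal (rho_norm G g x) \<partial>signsgd_dist f G (\<lambda>k. gam) x0 k)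
      \<le> ennreal (real K * ((f x0 - fstar) / (gam * real K) + gam * (\<Sum>i\<in>UNIV. L i) / 2))" .
qed

end

theorem theorem2:
  fixes f :: "real ^ 'd \<Rightarrow> real"
    and g :: "real ^ 'd \<Rightarrow> real ^ 'd"
    and G :: "real ^ 'd \<Rightarrow> (real ^ 'd) measure"
    and L :: "'d \<Rightarrow> real"
    and fstar :: real
    and x0 :: "real ^ 'd"
  assumes grad: "\<And>x. (f has_derivative (\<lambda>h. g x \<bullet> h)) (at x)"
    and lower: "\<And>x. fstar \<le> f x"
    and L_nonneg: "\<And>i. 0 \<le> L i"
    and smooth: "\<And>x y. f y \<le> f x + g x \<bullet> (y - x) + (\<Sum>i\<in>UNIV. L i / 2 * (y $ i - x $ i)\<^sup>2)"
    and kernel: "G \<in> borel \<rightarrow>\<^sub>M prob_algebra borel"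
    and SPB: "\<And>x i. g x $ i \<noteq> 0 \<Longrightarrow> rho G g x i > 1 / 2"
  shows
    "(\<forall>gam0 > 0. \<forall>K \<ge> 1.
        ennreal (1 / real K) *
          (\<Sum>k<K. \<integral>\<^sup>+ x. ennreal (rho_norm G g x)
              \<partial>signsgd_dist f G (\<lambda>k. gam0 / sqrt (real k + 1)) x0 k)
        \<le> ennreal (1 / sqrt (real K) *
             ((f x0 - fstar) / gam0 + gam0 * real CARD('d) * ((\<Sum>i\<in>UNIV. L i) / real CARD('d)))))
     \<and>
     (\<forall>gam > 0. \<forall>K \<ge> 1.
        ennreal (1 / real K) *
          (\<Sum>k<K. \<integral>\<^sup>+ x. ennreal (rho_norm G g x)
              \<partial>signsgd_dist f G (\<lambda>k. gam) x0 k)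
        \<le> ennreal ((f x0 - fstar) / (gam * real K)
             + gam * real CARD('d) * ((\<Sum>i\<in>UNIV. L i) / real CARD('d)) / 2))"
proof -
  interpret signsgd_problem f g G L fstar
    using grad lower L_nonneg smooth kernel by unfold_locales
  have "real CARD('d) * (S / real CARD('d)) = S" for S :: real
    by simp
  then show ?thesis
    using average_rho_norm_decaying_step average_rho_norm_constant_step
    by (simp add: mult.assoc)
qed

end
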